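(* Let $(E\to M,\rho,\langle\cdot,\cdot\rangle,\circ)$ be a Courant algebroid, $(\mathbf I,\mathbf J,\mathbf K)$ an almost hypercomplex structure on $E$, and let $\nabla$ be the hypercomplex connection $$\nabla_XY=-\tfrac12\mathbf K\big(\mathbf JY\circ\mathbf IX-\mathbf J(Y\circ\mathbf IX)-\mathbf I(\mathbf JY\circ X)+\mathbf J\mathbf I(Y\circ X)\big).$$ Then for all $X,Y\in\Gamma(E)$: (a) $\nabla_X\mathbf J=0$; (b) $(\nabla_X\mathbf I)Y=\tfrac12\mathbf K N_{\mathbf I,\mathbf J}(X,\mathbf IY)+\tfrac12\mathbf J N_{\mathbf I,\mathbf J}(X,Y)$; (c) $X\circ Y+\tfrac12\mathbf K N_{\mathbf I,\mathbf J}(X,Y)=\nabla_XY-\nabla_YX+D\langle X,Y\rangle-\big(\mathbf ID\langle X,\mathbf IY\rangle+\mathbf JD\langle X,\mathbf JY\rangle+\mathbf KD\langle X,\mathbf KY\rangle\big)$.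
   Context: A Courant algebroid $(E\to M,\rho,\langle\cdot,\cdot\rangle,\circ)$ consists of a real vector bundle $E\to M$ over a smooth manifold, a nondegenerate symmetric fiberwise bilinear pairing $\langle\cdot,\cdot\rangle$ on $E$, a vector bundle map $\rho:E\to TM$ (the anchor), and an $\mathbb R$-bilinear operation $\circ$ on $\Gamma(E)$ (the Dorfman bracket) such that for all $f\in C^\infty(M)$, $x,y,z\in\Gamma(E)$: $x\circ(y\circ z)=(x\circ y)\circ z+y\circ(x\circ z)$; $\rho(x\circ y)=[\rho(x),\rho(y)]$; $x\circ(fy)=(\rho(x)f)y+f(x\circ y)$; $x\circ y+y\circ x=2D\langle x,y\rangle$; $(Df)\circ x=0$; $\rho(x)\langle y,z\rangle=\langle x\circ y,z\rangle+\langle y,x\circ z\rangle$. Here $D:C^\infty(M)\to\Gamma(E)$ is the $\mathbb R$-linear map defined by $\langle Df,x\rangle=\tfrac12\rho(x)f$. For vector bundle endomorphisms $F,G$ of $E$ (over $\mathrm{id}_M$), the Nijenhuis concomitant is the tensor $N_{F,G}:E\otimes E\to E$ given by $N_{F,G}(X,Y)=FX\circ GY-F(X\circ GY)-G(FX\circ Y)+FG(X\circ Y)+GX\circ FY-G(X\circ FY)-F(GX\circ Y)+GF(X\circ Y)$. An almost hypercomplex structure on $E$ is a triple $(\mathbf I,\mathbf J,\mathbf K)$ of vector bundle endomorphisms of $E$ over $\mathrm{id}_M$, each orthogonal for $\langle\cdot,\cdot\rangle$, with $\mathbf I^2=\mathbf J^2=\mathbf K^2=\mathbf I\mathbf J\mathbf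 K=-1$. Given an almost hypercomplex structure, for $f\in C^\infty(M)$ and $X,Y\in\Gamma(E)$ set $\Delta_f(X,Y)=\langle X,Y\rangle Df+\langle\mathbf IX,Y\rangle\mathbf I Df+\langle\mathbf JX,Y\rangle\mathbf JDf+\langle\mathbf KX,Y\rangle\mathbf KDf$. A hypercomplex connection is an $\mathbb R$-bilinear map $\Gamma(E)\times\Gamma(E)\to\Gamma(E)$, $(X,Y)\mapsto\nabla_XY$, with $\nabla_{fX}Y=f\nabla_XY$ and $\nabla_X(fY)=(\rho(X)f)Y+f\nabla_XY-\Delta_f(X,Y)$. For an endomorphism $P$ of $E$, $(\nabla_XP)Y:=\nabla_X(PY)-P(\nabla_XY)$, and $\nabla_XP=0$ means this vanishes for all $Y$. *)

theory Defs
  imports Complex_Main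
begin

text \<open>
The smooth functions C^\<infinity>(M) are an
abstract commutative real algebra of type 'f; the sections \<Gamma>(E) form a real vector
space of type 'e which is a module over 'f via smul.  Vector fields on M are
represented by their action on functions (derivations of 'f); the anchor rho sends
a section x to the derivation rho x.
\<close>

definition section_module ::
  "('f::{comm_ring_1,real_algebra_1} \<Rightarrow> 'e::real_vector \<Rightarrow> 'e) \<Rightarrow> bool" where
  "section_module smul \<longleftrightarrow>
     (\<forall>f x y. smul f (x + y) = smul f x + smul f y) \<and>
     (\<forall>f g x. smul (f + g) x = smul f x + smul g x) \<and>
     (\<forall>f g x. smul (f * g) x = smul f (smul g x)) \<and>
     (\<forall>x. smul 1 x = x) \<and>
     (\<forall>c x. smul (of_real c) x = c *\<^sub>R x)"

definition derivation :: "('f::{comm_ring_1,real_algebra_1} \<Rightarrow> 'f) \<Rightarrow> bool" where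
  "derivation v \<longleftrightarrow>
     (\<forall>f g. v (f + g) = v f + v g) \<and>
     (\<forall>c f. v (c *\<^sub>R f) = c *\<^sub>R v f) \<and>
     (\<forall>f g. v (f * g) = f * v g + g * v f)"

definition vf_bracket :: "('f::ring \<Rightarrow> 'f) \<Rightarrow> ('f \<Rightarrow> 'f) \<Rightarrow> ('f \<Rightarrow> 'f)" where
  "vf_bracket v w = (\<lambda>f. v (w f) - w (v f))"

text \<open>The operator D, characterised by  <D f, x> = 1/2 rho(x) f  (unique by nondegeneracy).\<close>
definition Dop :: "('e \<Rightarrow> 'e \<Rightarrow> 'f::real_vector) \<Rightarrow> ('e \<Rightarrow> 'f \<Rightarrow> 'f) \<Rightarrow> 'f \<Rightarrow> 'e" where
  "Dop pair rho f = (THE d. \<forall>x. pair d x = (1/2) *\<^sub>R rho x f)"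

definition courant_algebroid ::
  "('f::{comm_ring_1,real_algebra_1} \<Rightarrow> 'e::real_vector \<Rightarrow> 'e) \<Rightarrow> ('e \<Rightarrow> 'e \<Rightarrow> 'f) \<Rightarrow>
   ('e \<Rightarrow> 'f \<Rightarrow> 'f) \<Rightarrow> ('e \<Rightarrow> 'e \<Rightarrow> 'e) \<Rightarrow> bool" where
  "courant_algebroid smul pair rho dorf \<longleftrightarrow>
     section_module smul \<and>
     \<comment> \<open>pairing: symmetric, C^\<infinity>(M)-bilinear, nondegenerate\<close>
     (\<forall>x y. pair x y = pair y x) \<and>
     (\<forall>x y z. pair (x + y) z = pair x z + pair y z) \<and>
     (\<forall>f x y. pair (smul f x) y = f * pair x y) \<and>
     (\<forall>x. (\<forall>y. pair x y = 0) \<longrightarrow> x = 0) \<and>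
     \<comment> \<open>anchor: a vector bundle map E \<rightarrow> TM\<close>
     (\<forall>x. derivation (rho x)) \<and>
     (\<forall>x y f. rho (x + y) f = rho x f + rho y f) \<and>
     (\<forall>g x f. rho (smul g x) f = g * rho x f) \<and>
     \<comment> \<open>D is well defined\<close>
     (\<forall>f. \<exists>d. \<forall>x. pair d x = (1/2) *\<^sub>R rho x f) \<and>
     \<comment> \<open>Dorfman bracket is R-bilinear\<close>
     (\<forall>x y z. dorf (x + y) z = dorf x z + dorf y z) \<and>
     (\<forall>x y z. dorf x (y + z) = dorf x y + dorf x z) \<and>
     (\<forall>c x y. dorf (c *\<^sub>R x) y = c *\<^sub>R dorf x y) \<and>
     (\<forall>c x y. dorf x (c *\<^sub>R y) = c *\<^sub>R dorf x y) \<and>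
     \<comment> \<open>Courant algebroid axioms\<close>
     (\<forall>x y z. dorf x (dorf y z) = dorf (dorf x y) z + dorf y (dorf x z)) \<and>
     (\<forall>x y. rho (dorf x y) = vf_bracket (rho x) (rho y)) \<and>
     (\<forall>x f y. dorf x (smul f y) = smul (rho x f) y + smul f (dorf x y)) \<and>
     (\<forall>x y. dorf x y + dorf y x = 2 *\<^sub>R Dop pair rho (pair x y)) \<and>
     (\<forall>f x. dorf (Dop pair rho f) x = 0) \<and>
     (\<forall>x y z. rho x (pair y z) = pair (dorf x y) z + pair y (dorf x z))"

text \<open>Vector bundle endomorphism of E over id_M: a C^\<infinity>(M)-linear map of sections.\<close>
definition bundle_endo :: "('f \<Rightarrow> 'e::real_vector \<Rightarrow> 'e) \<Rightarrow> ('e \<Rightarrow> 'e) \<Rightarrow> bool" where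
  "bundle_endo smul F \<longleftrightarrow>
     (\<forall>x y. F (x + y) = F x + F y) \<and> (\<forall>f x. F (smul f x) = smul f (F x))"

definition orthogonal_endo :: "('e \<Rightarrow> 'e \<Rightarrow> 'f) \<Rightarrow> ('e \<Rightarrow> 'e) \<Rightarrow> bool" where
  "orthogonal_endo pair F \<longleftrightarrow> (\<forall>x y. pair (F x) (F y) = pair x y)"

definition almost_hypercomplex ::
  "('f \<Rightarrow> 'e::real_vector \<Rightarrow> 'e) \<Rightarrow> ('e \<Rightarrow> 'e \<Rightarrow> 'f) \<Rightarrow> ('e \<Rightarrow> 'e) \<Rightarrow> ('e \<Rightarrow> 'e) \<Rightarrow> ('e \<Rightarrow> 'e) \<Rightarrow> bool" where
  "almost_hypercomplex smul pair I J K \<longleftrightarrow>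
     bundle_endo smul I \<and> bundle_endo smul J \<and> bundle_endo smul K \<and>
     orthogonal_endo pair I \<and> orthogonal_endo pair J \<and> orthogonal_endo pair K \<and>
     (\<forall>x. I (I x) = - x) \<and> (\<forall>x. J (J x) = - x) \<and> (\<forall>x. K (K x) = - x) \<and>
     (\<forall>x. I (J (K x)) = - x)"

definition nijenhuis_conc ::
  "('e \<Rightarrow> 'e \<Rightarrow> 'e::real_vector) \<Rightarrow> ('e \<Rightarrow> 'e) \<Rightarrow> ('e \<Rightarrow> 'e) \<Rightarrow> 'e \<Rightarrow> 'e \<Rightarrow> 'e" where
  "nijenhuis_conc dorf F G X Y =
     dorf (F X) (G Y) - F (dorf X (G Y)) - G (dorf (F X) Y) + F (G (dorf X Y))
     + dorf (G X) (F Y) - G (dorf X (F Y)) - F (dorf (G X) Y) + G (F (dorf X Y))"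

end

theory Submission
  imports Defs
begin

text \<open>A C^\<infinity>(M)-linear map of sections is in particular R-linear, since real constants
  act through the module structure.\<close>

lemma bundle_endo_linear:
  assumes "section_module smul" and "bundle_endo smul F"
  shows "linear F"
proof (rule linearI)
  show "F (x + y) = F x + F y" for x y
    using assms(2) by (simp add: bundle_endo_def)
  show "F (c *\<^sub>R x) = c *\<^sub>R F x" for c x
  proof -
    have "F (smul (of_real c) x) = smul (of_real c) (F x)"
      using assms(2) by (simp add: bundle_endo_def)
    then show ?thesis
      using assms(1) by (simp add: section_module_def)
  qed
qed

lemma quaternion_products:
  fixes I J K :: "'a::real_vector \<Rightarrow> 'a"
  assumes LI: "linear I" and LJ: "linear J" and LK: "linear K"
    and II: "\<And>x. I (I x) = - x" and JJ: "\<And>x. J (J x) = - x"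
    and KK: "\<And>x. K (K x) = - x" and IJK: "\<And>x. I (J (K x)) = - x"
  shows "I (J x) = K x" and "J (K x) = I x" and "K (I x) = J x"
    and "J (I x) = - K x" and "K (J x) = - I x" and "I (K x) = - J x"
proof -
  have IJ: "I (J y) = K y" for y
    using IJK[of "K y"] by (simp add: KK linear_neg[OF LI] linear_neg[OF LJ])
  have JK: "J (K y) = I y" for y
    using arg_cong[OF IJK[of y], of I] by (simp add: II linear_neg[OF LI])
  have IK: "I (K y) = - J y" for y
    using JK[of "K y"] by (simp add: KK linear_neg[OF LJ])
  have JI: "J (I y) = - K y" for y
    using arg_cong[OF JK[of y], of J] by (simp add: JJ)
  have KJ: "K (J y) = - I y" for y
    using IJ[of "J y"] by (simp add: JJ linear_neg[OF LI])
  have KI: "K (I y) = J y" for y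
    by (metis IJ JI II linear_neg[OF LI] minus_minus)
  show "I (J x) = K x" "J (K x) = I x" "K (I x) = J x"
    "J (I x) = - K x" "K (J x) = - I x" "I (K x) = - J x"
    by (fact IJ JK KI JI KJ IK)+
qed

lemma complex_structure_skew:
  assumes "orthogonal_endo pair F" and "\<And>x. F (F x) = - x"
    and "\<And>x y. pair (- x) y = - pair x y"
  shows "pair (F a) b = - pair a (F b)"
proof -
  have "pair (F a) b = pair (F (F a)) (F b)"
    using assms(1) by (simp add: orthogonal_endo_def)
  then show ?thesis
    by (simp add: assms(2,3))
qed

context
  fixes smul :: "'f::{comm_ring_1,real_algebra_1} \<Rightarrow> 'e::real_vector \<Rightarrow> 'e"
    and pair :: "'e \<Rightarrow> 'e \<Rightarrow> 'f"
    and rho :: "'e \<Rightarrow> 'f \<Rightarrow> 'f"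
    and dorf :: "'e \<Rightarrow> 'e \<Rightarrow> 'e"
  assumes CA: "courant_algebroid smul pair rho dorf"
begin

private lemma ca_axioms [rule_format]:
  shows "section_module smul"
    and "\<forall>x y. pair x y = pair y x"
    and "\<forall>x y z. pair (x + y) z = pair x z + pair y z"
    and "\<forall>x. (\<forall>y. pair x y = 0) \<longrightarrow> x = 0"
    and "\<forall>f. \<exists>d. \<forall>x. pair d x = (1/2) *\<^sub>R rho x f"
    and "\<forall>x. derivation (rho x)"
    and "\<forall>x y z. dorf (x + y) z = dorf x z + dorf y z"
    and "\<forall>x y z. dorf x (y + z) = dorf x y + dorf x z"
    and "\<forall>c x y. dorf (c *\<^sub>R x) y = c *\<^sub>R dorf x y"
    and "\<forall>c x y. dorf x (c *\<^sub>R y) = c *\<^sub>R dorf x y"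
    and "\<forall>x y. dorf x y + dorf y x = 2 *\<^sub>R Dop pair rho (pair x y)"
  using CA unfolding courant_algebroid_def by - (elim conjE, assumption)+

lemma ca_section_module: "section_module smul"
  by (rule ca_axioms(1))

lemma ca_pair_sym: "pair x y = pair y x"
  by (rule ca_axioms(2))

lemma ca_pair_diff_left: "pair (x - y) z = pair x z - pair y z"
proof -
  interpret additive "\<lambda>x. pair x z"
    by standard (rule ca_axioms(3))
  show ?thesis by (rule diff)
qed

lemma ca_pair_neg_left: "pair (- x) y = - pair x y"
  using ca_pair_diff_left[of 0 x y] ca_pair_diff_left[of 0 0 y] by simp

lemma ca_pair_neg_right: "pair x (- y) = - pair x y"
  by (metis ca_pair_sym ca_pair_neg_left)

lemma ca_pair_eqI: "(\<And>y. pair a y = pair b y) \<Longrightarrow> a = b"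
  using ca_axioms(4)[of "a - b"] by (simp add: ca_pair_diff_left)

lemma Dop_pair: "pair (Dop pair rho f) x = (1/2) *\<^sub>R rho x f"
proof -
  obtain d where d: "\<forall>x. pair d x = (1/2) *\<^sub>R rho x f"
    using ca_axioms(5) by blast
  have "\<exists>!d. \<forall>x. pair d x = (1/2) *\<^sub>R rho x f"
  proof (rule ex1I[of _ d])
    show "e = d" if "\<forall>x. pair e x = (1/2) *\<^sub>R rho x f" for e
      using that d by - (rule ca_pair_eqI, simp)
  qed (fact d)
  then have "\<forall>x. pair (Dop pair rho f) x = (1/2) *\<^sub>R rho x f"
    unfolding Dop_def by (rule theI')
  then show ?thesis ..
qed

text \<open>D is additive because every rho(x) is a derivation; oddness is what we need.\<close>

lemma Dop_neg: "Dop pair rho (- f) = - Dop pair rho f"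
proof (rule ca_pair_eqI)
  fix y
  interpret additive "rho y"
    by standard (use ca_axioms(6)[of y] in \<open>simp add: derivation_def\<close>)
  show "pair (Dop pair rho (- f)) y = pair (- Dop pair rho f) y"
    by (simp add: ca_pair_neg_left Dop_pair minus)
qed

lemma dorf_linear_left: "linear (\<lambda>x. dorf x y)"
  by (intro linearI) (simp_all add: ca_axioms(7,9))

lemma dorf_linear_right: "linear (dorf x)"
  by (intro linearI) (simp_all add: ca_axioms(8,10))

lemma dorf_swap: "dorf a b = - dorf b a + 2 *\<^sub>R Dop pair rho (pair b a)"
  using ca_axioms(11)[of b a] by (simp add: algebra_simps)

end

locale hypercomplex_courant =
  fixes smul :: "'f::{comm_ring_1,real_algebra_1} \<Rightarrow> 'e::real_vector \<Rightarrow> 'e"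
    and pair :: "'e \<Rightarrow> 'e \<Rightarrow> 'f"
    and rho :: "'e \<Rightarrow> 'f \<Rightarrow> 'f"
    and dorf :: "'e \<Rightarrow> 'e \<Rightarrow> 'e"
    and I J K :: "'e \<Rightarrow> 'e"
    and nabla :: "'e \<Rightarrow> 'e \<Rightarrow> 'e"
  assumes CA: "courant_algebroid smul pair rho dorf"
    and HC: "almost_hypercomplex smul pair I J K"
    and nabla_eq: "nabla X Y =
       - (1/2) *\<^sub>R K (dorf (J Y) (I X) - J (dorf Y (I X)) - I (dorf (J Y) X) + J (I (dorf Y X)))"
begin

lemma linear_IJK: "linear I" "linear J" "linear K"
  using HC bundle_endo_linear[OF ca_section_module[OF CA]]
  by (simp_all add: almost_hypercomplex_def)

lemma square_minus_one: "I (I x) = - x" "J (J x) = - x" "K (K x) = - x" "I (J (K x)) = - x"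
  using HC by (simp_all add: almost_hypercomplex_def)

lemmas quaternion = quaternion_products[OF linear_IJK square_minus_one]

lemma skew_IJK:
  "pair (I a) b = - pair a (I b)" "pair (J a) b = - pair a (J b)" "pair (K a) b = - pair a (K b)"
  using HC by (simp_all add: almost_hypercomplex_def complex_structure_skew
      square_minus_one ca_pair_neg_left[OF CA])

text \<open>Rewrite rules moving I, J, K, signs and real scalars out of brackets, pairings
  and D, and reducing products of I, J, K; they bring both sides of each identity
  to a common normal form once brackets are oriented consistently.\<close>

lemmas normalise =
  linear_IJK[THEN linear_add] linear_IJK[THEN linear_neg] linear_IJK[THEN linear_diff]
  linear_IJK[THEN linear_scale]
  dorf_linear_left[OF CA, THEN linear_add] dorf_linear_left[OF CA, THEN linear_neg]
  dorf_linear_left[OF CA, THEN linear_diff] dorf_linear_left[OF CA, THEN linear_scale]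
  dorf_linear_right[OF CA, THEN linear_add] dorf_linear_right[OF CA, THEN linear_neg]
  dorf_linear_right[OF CA, THEN linear_diff] dorf_linear_right[OF CA, THEN linear_scale]
  ca_pair_neg_left[OF CA] ca_pair_neg_right[OF CA] Dop_neg[OF CA] skew_IJK
  square_minus_one(1-3) quaternion

text \<open>(a) J is parallel.  Here no bracket needs to be swapped.\<close>

lemma J_parallel: "nabla X (J Y) - J (nabla X Y) = 0"
  by (simp add: nabla_eq normalise algebra_simps)

text \<open>The
  connection puts Y in first position of each bracket and N_{I,J} puts X there, so
  the brackets of nabla are swapped via dorf_swap; the D-terms so produced cancel.\<close>

lemma I_derivative:
  "nabla X (I Y) - I (nabla X Y) =
     (1/2) *\<^sub>R K (nijenhuis_conc dorf I J X (I Y)) + (1/2) *\<^sub>R J (nijenhuis_conc dorf I J X Y)"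
proof -
  note swap = dorf_swap[OF CA]
  show ?thesis
    by (simp add: nabla_eq nijenhuis_conc_def normalise algebra_simps
        swap[of Y X] swap[of "I Y" X] swap[of "J Y" X] swap[of "K Y" X]
        swap[of Y "I X"] swap[of "I Y" "I X"] swap[of "J Y" "I X"] swap[of "K Y" "I X"])
qed

text \<open>(c) The bracket is expressed through the torsion of nabla, N_{I,J} and D-terms;
  here the D-terms from swapping the brackets of nabla X Y survive.\<close>

lemma torsion_formula:
  "dorf X Y + (1/2) *\<^sub>R K (nijenhuis_conc dorf I J X Y) =
     nabla X Y - nabla Y X + Dop pair rho (pair X Y)
     - (I (Dop pair rho (pair X (I Y))) + J (Dop pair rho (pair X (J Y)))
        + K (Dop pair rho (pair X (K Y))))"
proof -
  note swap = dorf_swap[OF CA]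
  show ?thesis
    by (simp add: nabla_eq nijenhuis_conc_def normalise algebra_simps
        swap[of Y X] swap[of "J Y" X] swap[of Y "I X"] swap[of "J Y" "I X"])
      (simp add: scaleR_add_left[symmetric])
qed

end

theorem mainTheorem4:
  fixes smul :: "'f::{comm_ring_1,real_algebra_1} \<Rightarrow> 'e::real_vector \<Rightarrow> 'e"
    and pair :: "'e \<Rightarrow> 'e \<Rightarrow> 'f"
    and rho :: "'e \<Rightarrow> 'f \<Rightarrow> 'f"
    and dorf :: "'e \<Rightarrow> 'e \<Rightarrow> 'e"
    and I J K :: "'e \<Rightarrow> 'e"
    and nabla :: "'e \<Rightarrow> 'e \<Rightarrow> 'e"
  assumes CA: "courant_algebroid smul pair rho dorf"
    and HC: "almost_hypercomplex smul pair I J K"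
    and nabla_def: "\<And>X Y. nabla X Y =
       - (1/2) *\<^sub>R K (dorf (J Y) (I X) - J (dorf Y (I X)) - I (dorf (J Y) X) + J (I (dorf Y X)))"
  shows "(\<forall>X Y. nabla X (J Y) - J (nabla X Y) = 0) \<and>
         (\<forall>X Y. nabla X (I Y) - I (nabla X Y) =
           (1/2) *\<^sub>R K (nijenhuis_conc dorf I J X (I Y)) + (1/2) *\<^sub>R J (nijenhuis_conc dorf I J X Y)) \<and>
         (\<forall>X Y. dorf X Y + (1/2) *\<^sub>R K (nijenhuis_conc dorf I J X Y) =
           nabla X Y - nabla Y X + Dop pair rho (pair X Y)
           - (I (Dop pair rho (pair X (I Y))) + J (Dop pair rho (pair X (J Y)))
              + K (Dop pair rho (pair X (K Y)))))"
proof -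
  interpret hypercomplex_courant smul pair rho dorf I J K nabla
    by unfold_locales (fact CA HC nabla_def)+
  show ?thesis
    using J_parallel I_derivative torsion_formula by blast
qed

end
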